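(* Suppose the plant is exactly the LSTM network \[ \begin{aligned} x^+ &= \sigma_g(W_f u + U_f \xi + b_f)\circ x + \sigma_g(W_i u + U_i \xi + b_i)\circ \sigma_c(W_c u + U_c \xi + b_c),\\ \xi^+ &= \sigma_g(W_o u + U_o \xi + b_o)\circ \sigma_c(x^+),\qquad y = C\xi + b_y, \end{aligned} \] with inputs in $\mathcal{U}=[-u_{\max},u_{\max}]^{n_u}$, and that $\rho(A_\delta)<1$. Consider the observer with state $\hat\chi=(\hat x,\hat\xi)$ and gains $L_f,L_i,L_o\in\mathbb{R}^{n_x\times n_y}$: \[ \begin{aligned} \hat x^+ &= \sigma_g[W_f u + U_f\hat\xi + b_f + L_f(y-\hat y)]\circ\hat x + \sigma_g[W_i u + U_i\hat\xi + b_i + L_i(y-\hat y)]\circ\sigma_c(W_c u + U_c\hat\xi + b_c),\\ \hat\xi^+ &= \sigma_g[W_o u + U_o\hat\xi + b_o + L_o(y-\hat y)]\circ\sigma_c(\hat x^+),\qquad \hat y = C\hat\xi + b_y. \end{aligned} \] Let \[ \hat A=\begin{bmatrix}\hat{\bar\sigma}_g^f & \hat\alpha\\ \hat{\bar\sigma}_g^f\hat{\bar\sigma}_g^o & \tfrac14\bar{\sigma}_c^x\|U_o-L_oC\|+\hat{\bar\sigma}_g^o\hat\alpha\end{bmatrix}. \] If $\rho(\hat A)<1$, then the state estimate converges: $\hat\chi(k)-\chi(k)\to0$ as $k\to\infty$.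
   Context: $\sigma_g(t)=1/(1+e^{-t})$, $\sigma_c=\tanh$, applied entrywise; $\circ$ is the Hadamard product; $\|\cdot\|$ is the induced 2-norm, $\|\cdot\|_\infty$ the induced $\infty$-norm, $\rho$ the spectral radius; $[\cdot\ \cdots\ \cdot]$ is horizontal concatenation. Quantities: $\bar{\sigma}_g^\star=\sigma_g(\|[W_\star u_{\max}\ U_\star\ b_\star]\|_\infty)$ for $\star\in\{f,i,o\}$; $\bar{\sigma}_c^c=\sigma_c(\|[W_c u_{\max}\ U_c\ b_c]\|_\infty)$; $\bar{\sigma}_c^x=\sigma_c(\bar{\sigma}_g^i\bar{\sigma}_c^c/(1-\bar{\sigma}_g^f))$; $\alpha=\tfrac14\|U_f\|\frac{\bar{\sigma}_g^i\bar{\sigma}_c^c}{1-\bar{\sigma}_g^f}+\bar{\sigma}_g^i\|U_c\|+\tfrac14\|U_i\|\bar{\sigma}_c^c$; $A_\delta=\begin{bmatrix}\bar{\sigma}_g^f & \alpha\\ \bar{\sigma}_g^o\bar{\sigma}_g^f & \alpha\bar{\sigma}_g^o+\tfrac14\bar{\sigma}_c^x\|U_o\|\end{bmatrix}$. Observer quantities: $\hat{\bar\sigma}_g^\star=\sigma_g(\|[W_\star u_{\max}\ \ U_\star-L_\star C\ \ b_\star\ \ L_\star C]\|_\infty)$ for $\star\in\{f,i,o\}$; $\hat\alpha=\tfrac14\|U_f-L_fC\|\frac{\bar{\sigma}_g^i\bar{\sigma}_c^c}{1-\bar{\sigma}_g^f}+\bar{\sigma}_g^i\|U_c\|+\tfrac14\|U_i-L_iC\|\bar{\sigma}_c^c$.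 Plant and observer states are taken with $\xi,\hat\xi\in(-1,1)^{n_x}$ and $|x_{(j)}|,|\hat x_{(j)}|$ within the invariant bounds of the respective dynamics. *)

theory Defs
  imports "HOL-Analysis.Analysis"
begin

(* logistic sigmoid, the gate activation sigma_g; the cell activation sigma_c is tanh *)
definition sigmoid :: "real \<Rightarrow> real" where
  "sigmoid t = 1 / (1 + exp (- t))"

definition vmap :: "(real \<Rightarrow> real) \<Rightarrow> real^'n \<Rightarrow> real^'n" where
  "vmap f v = (\<chi> i. f (v $ i))"

definition hadamard :: "real^'n \<Rightarrow> real^'n \<Rightarrow> real^'n" (infixl "\<circ>\<^sub>h" 70) where
  "a \<circ>\<^sub>h b = (\<chi> i. a $ i * b $ i)"

definition opnorm2 :: "real^'m^'n \<Rightarrow> real" where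
  "opnorm2 A = onorm (\<lambda>v. A *v v)"

(* induced infinity-norm (maximum absolute row sum) of the horizontal concatenation
   [W*umax  U  b] *)
definition inf_norm_WUb :: "real^'u^'n \<Rightarrow> real^'x^'n \<Rightarrow> real^'n \<Rightarrow> real \<Rightarrow> real" where
  "inf_norm_WUb W U b umax =
     Max (range (\<lambda>i. (\<Sum>j\<in>UNIV. \<bar>umax * W $ i $ j\<bar>) + (\<Sum>j\<in>UNIV. \<bar>U $ i $ j\<bar>) + \<bar>b $ i\<bar>))"

(* induced infinity-norm of [W*umax  U-LC  b  LC] *)
definition inf_norm_obs :: "real^'u^'n \<Rightarrow> real^'n^'n \<Rightarrow> real^'n \<Rightarrow> real^'y^'n \<Rightarrow> real^'n^'y \<Rightarrow> real \<Rightarrow> real" where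
  "inf_norm_obs W U b L C umax =
     Max (range (\<lambda>i. (\<Sum>j\<in>UNIV. \<bar>umax * W $ i $ j\<bar>) + (\<Sum>j\<in>UNIV. \<bar>(U - L ** C) $ i $ j\<bar>)
                     + \<bar>b $ i\<bar> + (\<Sum>j\<in>UNIV. \<bar>(L ** C) $ i $ j\<bar>)))"

definition sig_bar :: "real^'u^'n \<Rightarrow> real^'n^'n \<Rightarrow> real^'n \<Rightarrow> real \<Rightarrow> real" where
  "sig_bar W U b umax = sigmoid (inf_norm_WUb W U b umax)"

definition tanh_bar :: "real^'u^'n \<Rightarrow> real^'n^'n \<Rightarrow> real^'n \<Rightarrow> real \<Rightarrow> real" where
  "tanh_bar W U b umax = tanh (inf_norm_WUb W U b umax)"

definition sig_hat :: "real^'u^'n \<Rightarrow> real^'n^'n \<Rightarrow> real^'n \<Rightarrow> real^'y^'n \<Rightarrow> real^'n^'y \<Rightarrow> real \<Rightarrow> real" where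
  "sig_hat W U b L C umax = sigmoid (inf_norm_obs W U b L C umax)"

definition mat2 :: "real \<Rightarrow> real \<Rightarrow> real \<Rightarrow> real \<Rightarrow> real^2^2" where
  "mat2 a b c d = (\<chi> i j. if i = 1 then (if j = 1 then a else b) else (if j = 1 then c else d))"

definition spectral_radius :: "real^'n^'n \<Rightarrow> real" where
  "spectral_radius A = Max {cmod z | z. \<exists>v :: complex^'n. v \<noteq> 0 \<and>
        (\<chi> i j. complex_of_real (A $ i $ j)) *v v = z *s v}"

end

(*
  Both networks keep their hidden states in (-1,1)^n, so every gate argument is bounded by
  the infinity norm of the stacked weights; this bounds the gates by sig_bar, sig_hat and
  tanh_bar, and keeps the plant cell state below the fixed point
  X = sig_i sig_c / (1 - sig_f) of x |-> sig_f x + sig_i sig_c.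
  Because the output injection is L (y - y_hat) = L C (xi - xi_hat), each observer gate argument
  differs from the plant's by (U - L C) (xi_hat - xi).  Splitting the Hadamard products and
  using the Lipschitz constants 1/4 of the sigmoid and 1 of tanh, the error norms
  e_x = |x_hat - x| and e_xi = |xi_hat - xi| satisfy a comparison system with matrix A_hat.
  For a nonnegative 2x2 matrix, spectral radius < 1 provides a weight t > 0 with
  (1, t) A_hat < (1, t) componentwise, so e_x + t e_xi decays geometrically.
*)
theory Submission
  imports Defs
begin

section \<open>Lipschitz and norm estimates\<close>

lemma sigmoid_pos: "sigmoid t > 0"
  unfolding sigmoid_def by (simp add: add_pos_pos)

lemma sigmoid_less_1: "sigmoid t < 1"
  unfolding sigmoid_def by (simp add: add_pos_pos)

lemma sigmoid_mono: "s \<le> t \<Longrightarrow> sigmoid s \<le> sigmoid t"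
  unfolding sigmoid_def by (simp add: add_pos_pos frac_le)

lemma sigmoid_lipschitz: "\<bar>sigmoid s - sigmoid t\<bar> \<le> 1/4 * \<bar>s - t\<bar>"
proof -
  have deriv: "(sigmoid has_field_derivative exp (-z) / (1 + exp (-z))^2) (at z)" for z
    using exp_gt_zero[of "-z"] unfolding sigmoid_def
    by (auto intro!: derivative_eq_intros simp: power2_eq_square field_simps add_pos_pos
        simp del: exp_gt_zero)
  have deriv_le: "norm (exp (-z) / (1 + exp (-z))^2) \<le> 1/4" for z :: real
  proof -
    have "4 * exp (-z) \<le> (1 + exp (-z))^2"
      using sum_power2_ge_zero[of "1 - exp (-z)" 0] by (simp add: power2_eq_square algebra_simps)
    moreover have "(1 + exp (-z))^2 > 0"
      using exp_gt_zero[of "-z"] by (intro zero_less_power) linarith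
    ultimately show ?thesis by (simp add: pos_divide_le_eq)
  qed
  have "norm (sigmoid s - sigmoid t) \<le> 1/4 * norm (s - t)"
    by (rule field_differentiable_bound[OF convex_UNIV _ deriv_le])
       (auto intro: has_field_derivative_at_within deriv)
  then show ?thesis by simp
qed

lemma tanh_lipschitz: "\<bar>tanh s - tanh t\<bar> \<le> \<bar>s - (t::real)\<bar>"
proof -
  have deriv_le: "norm (1 - tanh z ^ 2) \<le> 1" for z :: real
  proof -
    have "tanh z ^ 2 < 1" using tanh_real_bounds[of z] abs_square_less_1 by fastforce
    then show ?thesis by (simp add: abs_le_iff)
  qed
  have "norm (tanh s - tanh t) \<le> 1 * norm (s - t)"
    by (rule field_differentiable_bound[OF convex_UNIV _ deriv_le])
       (auto intro: has_field_derivative_at_within has_field_derivative_tanh[of "\<lambda>x. x" _ 1, simplified])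
  then show ?thesis by simp
qed

lemma norm_le_scaled_componentwise:
  fixes a b :: "real^'n"
  assumes "\<And>i. \<bar>a $ i\<bar> \<le> M * \<bar>b $ i\<bar>" and "M \<ge> 0"
  shows "norm a \<le> M * norm b"
proof -
  have "norm a \<le> norm (M *s b)"
    by (rule norm_le_componentwise_cart) (simp add: assms abs_mult)
  then show ?thesis
    using assms(2) by (simp add: scalar_mult_eq_scaleR)
qed

lemma norm_hadamard_le:
  assumes "\<And>i. \<bar>a $ i\<bar> \<le> M"
  shows "norm (a \<circ>\<^sub>h b) \<le> M * norm b"
proof (rule norm_le_scaled_componentwise)
  show "\<bar>(a \<circ>\<^sub>h b) $ i\<bar> \<le> M * \<bar>b $ i\<bar>" for i
    by (simp add: hadamard_def abs_mult assms mult_right_mono)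
  show "M \<ge> 0" using assms[of undefined] by linarith
qed

lemma norm_vmap_diff_le:
  assumes lipschitz: "\<And>s t. \<bar>f s - f t\<bar> \<le> K * \<bar>s - t\<bar>"
  shows "norm (vmap f a - vmap f b) \<le> K * norm (a - b)"
proof (rule norm_le_scaled_componentwise)
  show "\<bar>(vmap f a - vmap f b) $ i\<bar> \<le> K * \<bar>(a - b) $ i\<bar>" for i
    by (simp add: vmap_def lipschitz)
  show "K \<ge> 0" using lipschitz[of 1 0] by simp
qed

lemma norm_matrix_vector_mult_le_opnorm2: "norm (A *v v) \<le> opnorm2 A * norm v"
  unfolding opnorm2_def by (rule onorm) simp

lemma opnorm2_nonneg: "opnorm2 A \<ge> 0"
  unfolding opnorm2_def by (rule onorm_pos_le) simp

section \<open>Gates and state updates\<close>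

lemma abs_matrix_vector_mult_le:
  fixes M :: "real^'a^'n"
  assumes "\<And>j. \<bar>v $ j\<bar> \<le> r"
  shows "\<bar>(M *v v) $ i\<bar> \<le> (\<Sum>j\<in>UNIV. \<bar>r * M $ i $ j\<bar>)"
proof -
  have "\<bar>(M *v v) $ i\<bar> \<le> (\<Sum>j\<in>UNIV. \<bar>M $ i $ j * v $ j\<bar>)"
    unfolding matrix_vector_mult_def by (simp add: sum_abs)
  also have "\<dots> \<le> (\<Sum>j\<in>UNIV. \<bar>r * M $ i $ j\<bar>)"
  proof (rule sum_mono)
    fix j
    have "\<bar>v $ j\<bar> \<le> \<bar>r\<bar>" using assms[of j] by linarith
    then have "\<bar>v $ j\<bar> * \<bar>M $ i $ j\<bar> \<le> \<bar>r\<bar> * \<bar>M $ i $ j\<bar>"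
      by (rule mult_right_mono) simp
    then show "\<bar>M $ i $ j * v $ j\<bar> \<le> \<bar>r * M $ i $ j\<bar>"
      by (simp add: abs_mult mult.commute)
  qed
  finally show ?thesis .
qed

lemma inf_norm_WUb_nonneg: "inf_norm_WUb W U b umax \<ge> 0"
proof -
  have "0 \<le> (\<Sum>j\<in>UNIV. \<bar>umax * W $ i $ j\<bar>) + (\<Sum>j\<in>UNIV. \<bar>U $ i $ j\<bar>) + \<bar>b $ i\<bar>" for i
    by (simp add: sum_nonneg)
  also have "\<dots> i \<le> inf_norm_WUb W U b umax" for i
    unfolding inf_norm_WUb_def by (rule Max_ge) auto
  finally show ?thesis .
qed

lemma abs_gate_arg_le_inf_norm_WUb:
  fixes W :: "real^'u^'n" and U :: "real^'x^'n"
  assumes "\<And>j. \<bar>u $ j\<bar> \<le> umax" and "\<And>j. \<bar>\<xi> $ j\<bar> \<le> 1"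
  shows "\<bar>(W *v u + U *v \<xi> + b) $ i\<bar> \<le> inf_norm_WUb W U b umax"
proof -
  have "\<bar>(W *v u + U *v \<xi> + b) $ i\<bar> \<le> \<bar>(W *v u) $ i\<bar> + \<bar>(U *v \<xi>) $ i\<bar> + \<bar>b $ i\<bar>"
    by simp
  also have "\<dots> \<le> (\<Sum>j\<in>UNIV. \<bar>umax * W $ i $ j\<bar>) + (\<Sum>j\<in>UNIV. \<bar>U $ i $ j\<bar>) + \<bar>b $ i\<bar>"
    using abs_matrix_vector_mult_le[of u umax W i] abs_matrix_vector_mult_le[of \<xi> 1 U i] assms
    by simp
  also have "\<dots> \<le> inf_norm_WUb W U b umax"
    unfolding inf_norm_WUb_def by (rule Max_ge) auto
  finally show ?thesis .
qed

lemma obs_gate_arg_eq: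
  fixes U :: "real^'n^'n" and L :: "real^'y^'n" and C :: "real^'n^'y"
  shows "W *v u + U *v \<xi>h + b + L *v ((C *v \<xi> + b_y) - (C *v \<xi>h + b_y))
           = W *v u + (U - L ** C) *v \<xi>h + b + (L ** C) *v \<xi>"
  by (simp add: matrix_vector_mult_diff_distrib matrix_vector_mult_diff_rdistrib
      matrix_vector_mul_assoc)

lemma abs_obs_gate_arg_le_inf_norm_obs:
  fixes W :: "real^'u^'n" and U :: "real^'n^'n" and L :: "real^'y^'n" and C :: "real^'n^'y"
  assumes "\<And>j. \<bar>u $ j\<bar> \<le> umax" and "\<And>j. \<bar>\<xi> $ j\<bar> \<le> 1" and "\<And>j. \<bar>\<xi>h $ j\<bar> \<le> 1"
  shows "\<bar>(W *v u + U *v \<xi>h + b + L *v ((C *v \<xi> + b_y) - (C *v \<xi>h + b_y))) $ i\<bar>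
           \<le> inf_norm_obs W U b L C umax"
proof -
  have "\<bar>(W *v u + (U - L ** C) *v \<xi>h + b + (L ** C) *v \<xi>) $ i\<bar>
     \<le> \<bar>(W *v u) $ i\<bar> + \<bar>((U - L ** C) *v \<xi>h) $ i\<bar> + \<bar>b $ i\<bar> + \<bar>((L ** C) *v \<xi>) $ i\<bar>"
    by simp
  also have "\<dots> \<le> (\<Sum>j\<in>UNIV. \<bar>umax * W $ i $ j\<bar>) + (\<Sum>j\<in>UNIV. \<bar>(U - L ** C) $ i $ j\<bar>)
                     + \<bar>b $ i\<bar> + (\<Sum>j\<in>UNIV. \<bar>(L ** C) $ i $ j\<bar>)"
    using abs_matrix_vector_mult_le[of u umax W i] abs_matrix_vector_mult_le[of \<xi>h 1 "U - L ** C" i]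
      abs_matrix_vector_mult_le[of \<xi> 1 "L ** C" i] assms
    by simp
  also have "\<dots> \<le> inf_norm_obs W U b L C umax"
    unfolding inf_norm_obs_def by (rule Max_ge) auto
  finally show ?thesis unfolding obs_gate_arg_eq .
qed

lemma sig_bar_nonneg: "sig_bar W U b umax \<ge> 0"
  unfolding sig_bar_def using sigmoid_pos less_imp_le by blast

lemma sig_bar_less_1: "sig_bar W U b umax < 1"
  unfolding sig_bar_def by (rule sigmoid_less_1)

lemma tanh_bar_nonneg: "tanh_bar W U b umax \<ge> 0"
  unfolding tanh_bar_def using inf_norm_WUb_nonneg by simp

lemma sig_hat_nonneg: "sig_hat W U b L C umax \<ge> 0"
  unfolding sig_hat_def using sigmoid_pos less_imp_le by blast

lemma abs_sigmoid_le_sigmoid_bound: "\<bar>t\<bar> \<le> B \<Longrightarrow> \<bar>sigmoid t\<bar> \<le> sigmoid B"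
  using sigmoid_pos[of t] sigmoid_mono[of t B] by simp

lemma abs_sigmoid_gate_le_sig_bar:
  fixes W :: "real^'u^'n" and U :: "real^'n^'n"
  assumes "\<And>j. \<bar>u $ j\<bar> \<le> umax" and "\<And>j. \<bar>\<xi> $ j\<bar> \<le> 1"
  shows "\<bar>vmap sigmoid (W *v u + U *v \<xi> + b) $ i\<bar> \<le> sig_bar W U b umax"
  unfolding vmap_def sig_bar_def vec_lambda_beta
  by (intro abs_sigmoid_le_sigmoid_bound abs_gate_arg_le_inf_norm_WUb assms)

lemma abs_tanh_gate_le_tanh_bar:
  fixes W :: "real^'u^'n" and U :: "real^'n^'n"
  assumes "\<And>j. \<bar>u $ j\<bar> \<le> umax" and "\<And>j. \<bar>\<xi> $ j\<bar> \<le> 1"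
  shows "\<bar>vmap tanh (W *v u + U *v \<xi> + b) $ i\<bar> \<le> tanh_bar W U b umax"
  using abs_gate_arg_le_inf_norm_WUb[OF assms, of W U b i]
  unfolding vmap_def tanh_bar_def by (simp flip: tanh_real_abs)

lemma abs_obs_sigmoid_gate_le_sig_hat:
  fixes W :: "real^'u^'n" and U :: "real^'n^'n" and L :: "real^'y^'n" and C :: "real^'n^'y"
  assumes "\<And>j. \<bar>u $ j\<bar> \<le> umax" and "\<And>j. \<bar>\<xi> $ j\<bar> \<le> 1" and "\<And>j. \<bar>\<xi>h $ j\<bar> \<le> 1"
  shows "\<bar>vmap sigmoid (W *v u + U *v \<xi>h + b + L *v ((C *v \<xi> + b_y) - (C *v \<xi>h + b_y))) $ i\<bar>
           \<le> sig_hat W U b L C umax"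
  unfolding vmap_def sig_hat_def vec_lambda_beta
  by (intro abs_sigmoid_le_sigmoid_bound abs_obs_gate_arg_le_inf_norm_obs assms)

lemma norm_obs_sigmoid_gate_diff_le:
  fixes U :: "real^'n^'n" and L :: "real^'y^'n" and C :: "real^'n^'y"
  shows "norm (vmap sigmoid (W *v u + U *v \<xi>h + b + L *v ((C *v \<xi> + b_y) - (C *v \<xi>h + b_y)))
               - vmap sigmoid (W *v u + U *v \<xi> + b))
           \<le> 1/4 * opnorm2 (U - L ** C) * norm (\<xi>h - \<xi>)"
proof -
  let ?A = "W *v u + U *v \<xi>h + b + L *v ((C *v \<xi> + b_y) - (C *v \<xi>h + b_y))"
  have "norm (vmap sigmoid ?A - vmap sigmoid (W *v u + U *v \<xi> + b))
      \<le> 1/4 * norm (?A - (W *v u + U *v \<xi> + b))"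
    by (rule norm_vmap_diff_le[OF sigmoid_lipschitz])
  also have "?A - (W *v u + U *v \<xi> + b) = (U - L ** C) *v (\<xi>h - \<xi>)"
    unfolding obs_gate_arg_eq
    by (simp add: matrix_vector_mult_diff_distrib matrix_vector_mult_diff_rdistrib algebra_simps)
  finally show ?thesis
    using norm_matrix_vector_mult_le_opnorm2[of "U - L ** C" "\<xi>h - \<xi>"] by simp
qed

lemma norm_tanh_gate_diff_le:
  "norm (vmap tanh (W *v u + U *v \<xi>h + b) - vmap tanh (W *v u + U *v \<xi> + b))
     \<le> opnorm2 U * norm (\<xi>h - \<xi>)"
proof -
  have "norm (vmap tanh (W *v u + U *v \<xi>h + b) - vmap tanh (W *v u + U *v \<xi> + b))
      \<le> 1 * norm ((W *v u + U *v \<xi>h + b) - (W *v u + U *v \<xi> + b))"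
    by (rule norm_vmap_diff_le) (simp add: tanh_lipschitz)
  also have "(W *v u + U *v \<xi>h + b) - (W *v u + U *v \<xi> + b) = U *v (\<xi>h - \<xi>)"
    by (simp add: matrix_vector_mult_diff_distrib)
  finally show ?thesis
    using norm_matrix_vector_mult_le_opnorm2[of U "\<xi>h - \<xi>"] by simp
qed

lemma abs_cell_update_le:
  assumes "\<bar>F $ i\<bar> \<le> sf" and "\<bar>x $ i\<bar> \<le> X" and "\<bar>I $ i\<bar> \<le> si" and "\<bar>G $ i\<bar> \<le> sc"
  shows "\<bar>(F \<circ>\<^sub>h x + I \<circ>\<^sub>h G) $ i\<bar> \<le> sf * X + si * sc"
proof -
  have "\<bar>(F \<circ>\<^sub>h x + I \<circ>\<^sub>h G) $ i\<bar> \<le> \<bar>F $ i\<bar> * \<bar>x $ i\<bar> + \<bar>I $ i\<bar> * \<bar>G $ i\<bar>"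
    by (simp add: hadamard_def abs_mult[symmetric] abs_triangle_ineq)
  also have "\<dots> \<le> sf * X + si * sc"
    using assms by (intro add_mono mult_mono) auto
  finally show ?thesis .
qed

lemma abs_sigmoid_hadamard_tanh_less_1: "\<bar>(vmap sigmoid a \<circ>\<^sub>h vmap tanh b) $ i\<bar> < 1"
proof -
  have "\<bar>sigmoid (a $ i)\<bar> < 1" using sigmoid_pos[of "a $ i"] sigmoid_less_1[of "a $ i"] by simp
  moreover have "\<bar>sigmoid (a $ i)\<bar> * \<bar>tanh (b $ i)\<bar> \<le> \<bar>sigmoid (a $ i)\<bar>"
    using tanh_real_bounds[of "b $ i"] by (intro mult_left_le) auto
  ultimately show ?thesis
    unfolding hadamard_def vmap_def by (simp add: abs_mult)
qed

lemma norm_cell_update_diff_le: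
  assumes "\<And>i. \<bar>Fh $ i\<bar> \<le> hf" and "\<And>i. \<bar>x $ i\<bar> \<le> X"
    and "\<And>i. \<bar>I $ i\<bar> \<le> si" and "\<And>i. \<bar>Gh $ i\<bar> \<le> sc"
  shows "norm ((Fh \<circ>\<^sub>h xh + Ih \<circ>\<^sub>h Gh) - (F \<circ>\<^sub>h x + I \<circ>\<^sub>h G))
           \<le> hf * norm (xh - x) + X * norm (Fh - F) + si * norm (Gh - G) + sc * norm (Ih - I)"
proof -
  have "(Fh \<circ>\<^sub>h xh + Ih \<circ>\<^sub>h Gh) - (F \<circ>\<^sub>h x + I \<circ>\<^sub>h G)
      = Fh \<circ>\<^sub>h (xh - x) + x \<circ>\<^sub>h (Fh - F) + I \<circ>\<^sub>h (Gh - G) + Gh \<circ>\<^sub>h (Ih - I)"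
    by (simp add: vec_eq_iff hadamard_def algebra_simps)
  also have "norm \<dots> \<le> norm (Fh \<circ>\<^sub>h (xh - x)) + norm (x \<circ>\<^sub>h (Fh - F))
                       + norm (I \<circ>\<^sub>h (Gh - G)) + norm (Gh \<circ>\<^sub>h (Ih - I))"
    by (intro norm_triangle_le add_mono order_refl)
  also have "\<dots> \<le> hf * norm (xh - x) + X * norm (Fh - F) + si * norm (Gh - G) + sc * norm (Ih - I)"
    using assms by (intro add_mono norm_hadamard_le)
  finally show ?thesis .
qed

lemma norm_hidden_update_diff_le:
  assumes "\<And>i. \<bar>Ph $ i\<bar> \<le> ho" and "\<And>i. \<bar>x $ i\<bar> \<le> X"
  shows "norm (Ph \<circ>\<^sub>h vmap tanh xh - P \<circ>\<^sub>h vmap tanh x)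
           \<le> ho * norm (xh - x) + tanh X * norm (Ph - P)"
proof -
  have tanh_x: "\<bar>vmap tanh x $ i\<bar> \<le> tanh X" for i
    using assms(2)[of i] by (simp add: vmap_def flip: tanh_real_abs)
  have ho: "ho \<ge> 0" using assms(1)[of undefined] by linarith
  have tanh_diff: "norm (vmap tanh xh - vmap tanh x) \<le> 1 * norm (xh - x)"
    by (rule norm_vmap_diff_le) (simp add: tanh_lipschitz)
  have "Ph \<circ>\<^sub>h vmap tanh xh - P \<circ>\<^sub>h vmap tanh x
      = Ph \<circ>\<^sub>h (vmap tanh xh - vmap tanh x) + vmap tanh x \<circ>\<^sub>h (Ph - P)"
    by (simp add: vec_eq_iff hadamard_def algebra_simps)
  also have "norm \<dots> \<le> norm (Ph \<circ>\<^sub>h (vmap tanh xh - vmap tanh x)) + norm (vmap tanh x \<circ>\<^sub>h (Ph - P))"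
    by (rule norm_triangle_ineq)
  also have "\<dots> \<le> ho * norm (vmap tanh xh - vmap tanh x) + tanh X * norm (Ph - P)"
    by (intro add_mono norm_hadamard_le assms(1) tanh_x)
  also have "\<dots> \<le> ho * norm (xh - x) + tanh X * norm (Ph - P)"
    using tanh_diff ho by (simp add: mult_left_mono)
  finally show ?thesis .
qed

section \<open>Nonnegative 2x2 comparison systems\<close>

lemma mat2_eigen_iff:
  "(\<chi> i j. complex_of_real (mat2 a b c d $ i $ j)) *v v = z *s v \<longleftrightarrow>
     a * v $ 1 + b * v $ 2 = z * v $ 1 \<and> c * v $ 1 + d * v $ 2 = z * v $ 2"
  by (simp add: vec_eq_iff forall_2 matrix_vector_mult_def sum_2 mat2_def)

lemma mat2_eigenvalue_char_eq:
  fixes v :: "complex^2"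
  assumes "v \<noteq> 0" and "(\<chi> i j. complex_of_real (mat2 a b c d $ i $ j)) *v v = z *s v"
  shows "(z - a) * (z - d) = b * c"
proof -
  have e1: "(z - a) * v $ 1 = b * v $ 2" and e2: "(z - d) * v $ 2 = c * v $ 1"
    using assms(2) unfolding mat2_eigen_iff by (simp_all add: algebra_simps)
  have "((z - a) * (z - d) - b * c) * v $ 1 = (z - d) * ((z - a) * v $ 1) - b * (c * v $ 1)"
    by (simp add: algebra_simps)
  also have "\<dots> = 0"
    unfolding e1 e2[symmetric] by (simp add: algebra_simps)
  finally have v1: "((z - a) * (z - d) - b * c) * v $ 1 = 0" .
  have "((z - a) * (z - d) - b * c) * v $ 2 = (z - a) * ((z - d) * v $ 2) - c * (b * v $ 2)"
    by (simp add: algebra_simps)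
  also have "\<dots> = 0"
    unfolding e2 e1[symmetric] by (simp add: algebra_simps)
  finally have v2: "((z - a) * (z - d) - b * c) * v $ 2 = 0" .
  have "v $ 1 \<noteq> 0 \<or> v $ 2 \<noteq> 0"
    using assms(1) by (auto simp: vec_eq_iff forall_2)
  with v1 v2 show ?thesis by auto
qed

lemma finite_mat2_eigenvalue_moduli:
  "finite {cmod z | z. \<exists>v :: complex^2. v \<noteq> 0 \<and>
             (\<chi> i j. complex_of_real (mat2 a b c d $ i $ j)) *v v = z *s v}"
proof -
  define r where "r = csqrt ((a - d)^2 + 4 * (b * c))"
  define r1 r2 where "r1 = (a + d + r) / 2" and "r2 = (a + d - r) / 2"
  have "z \<in> {r1, r2}" if "v \<noteq> 0" "(\<chi> i j. complex_of_real (mat2 a b c d $ i $ j)) *v v = z *s v"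
    for z v
  proof -
    have "(z - r1) * (z - r2) = (z - a) * (z - d) - b * c"
      using power2_csqrt[of "(a - d)^2 + 4 * (b * c)"] unfolding r1_def r2_def r_def
      by (simp add: field_simps power2_eq_square)
    then have "(z - r1) * (z - r2) = 0"
      using mat2_eigenvalue_char_eq[OF that] by simp
    then show ?thesis by auto
  qed
  then have "{cmod z | z. \<exists>v :: complex^2. v \<noteq> 0 \<and>
               (\<chi> i j. complex_of_real (mat2 a b c d $ i $ j)) *v v = z *s v} \<subseteq> cmod ` {r1, r2}"
    by blast
  then show ?thesis by (rule finite_subset) simp
qed

lemma abs_le_spectral_radius_mat2:
  fixes a b c d l :: real
  assumes "(l - a) * (l - d) = b * c"
  shows "\<bar>l\<bar> \<le> spectral_radius (mat2 a b c d)"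
proof -
  have "\<exists>v :: complex^2. v \<noteq> 0 \<and>
          (\<chi> i j. complex_of_real (mat2 a b c d $ i $ j)) *v v = complex_of_real l *s v"
  proof -
    consider "b \<noteq> 0" | "b = 0" "l = d" | "b = 0" "l = a" "l \<noteq> d"
      using assms by (cases "b = 0") auto
    then show ?thesis
    proof cases
      case 1
      then show ?thesis
        using assms unfolding mat2_eigen_iff
        by (intro exI[of _ "vector [of_real b, of_real (l - a)]"])
           (auto simp: vec_eq_iff forall_2 algebra_simps simp flip: of_real_mult of_real_add of_real_diff)
    next
      case 2
      then show ?thesis
        unfolding mat2_eigen_iff by (intro exI[of _ "vector [0, 1]"]) (auto simp: vec_eq_iff forall_2)
    next
      case 3
      then show ?thesis
        unfolding mat2_eigen_iff
        by (intro exI[of _ "vector [of_real (l - d), of_real c]"])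
           (auto simp: vec_eq_iff forall_2 algebra_simps)
    qed
  qed
  then have "cmod (complex_of_real l) \<le> spectral_radius (mat2 a b c d)"
    unfolding spectral_radius_def by (intro Max_ge finite_mat2_eigenvalue_moduli) blast
  then show ?thesis by simp
qed

lemma spectral_radius_mat2_less_1D:
  fixes a b c d :: real
  assumes "b \<ge> 0" and "c \<ge> 0" and "spectral_radius (mat2 a b c d) < 1"
  shows "a < 1" and "d < 1" and "b * c < (1 - a) * (1 - d)"
proof -
  \<comment> \<open>\<open>(a + d \<plusminus> s) / 2\<close> are the eigenvalues, and \<open>(1 - a) (1 - d) - b c\<close> is the
    characteristic polynomial at 1.\<close>
  define s where "s = sqrt ((a - d)^2 + 4 * (b * c))"
  have bc: "b * c \<ge> 0" using assms by simp
  then have s2: "s^2 = (a - d)^2 + 4 * (b * c)" unfolding s_def by simp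
  have dist: "\<bar>a - d\<bar> \<le> s"
    unfolding s_def using bc by (intro real_le_rsqrt) simp
  have "((a + d + s) / 2 - a) * ((a + d + s) / 2 - d) = b * c"
    using s2 by (simp add: field_simps power2_eq_square)
  from abs_le_spectral_radius_mat2[OF this] assms(3)
  have root: "\<bar>(a + d + s) / 2\<bar> < 1" by linarith
  then show "a < 1" and "d < 1" using dist by auto
  have "(1 - a) * (1 - d) - b * c = (1 - (a + d + s) / 2) * (1 - (a + d - s) / 2)"
    using s2 by (simp add: field_simps power2_eq_square)
  also have "\<dots> > 0"
    using root dist by (intro mult_pos_pos) auto
  finally show "b * c < (1 - a) * (1 - d)" by simp
qed

lemma mat2_contracting_weight:
  fixes a b c d :: real
  assumes "b \<ge> 0" and "c \<ge> 0" and "d < 1" and "b * c < (1 - a) * (1 - d)"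
  obtains t where "t > 0" and "a + t * c < 1" and "b + t * d < t"
proof
  define D where "D = (1 - a) * (1 - d) - b * c"
  define \<epsilon> where "\<epsilon> = D / (2 * (c + 1))"
  define t where "t = (b + \<epsilon>) / (1 - d)"
  have D: "D > 0" unfolding D_def using assms(4) by simp
  then have \<epsilon>: "\<epsilon> > 0" unfolding \<epsilon>_def using assms(2) by simp
  have "D * c < D * (2 * (c + 1))"
    using D assms(2) by (intro mult_strict_left_mono) auto
  then have \<epsilon>c: "\<epsilon> * c < (1 - a) * (1 - d) - b * c"
    unfolding \<epsilon>_def D_def[symmetric] using assms(2) by (simp add: pos_divide_less_eq)
  have t1d: "t * (1 - d) = b + \<epsilon>" unfolding t_def using assms(3) by simp
  show "t > 0" unfolding t_def using assms \<epsilon> by simp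
  have "t * c * (1 - d) = (b + \<epsilon>) * c"
    using t1d by simp
  also have "\<dots> < (1 - a) * (1 - d)"
    using \<epsilon>c by (simp add: algebra_simps)
  finally show "a + t * c < 1"
    using assms(3) by (simp add: mult_less_cancel_right)
  show "b + t * d < t" using t1d \<epsilon> by (simp add: algebra_simps)
qed

lemma geometric_decay_tendsto_zero:
  fixes V :: "nat \<Rightarrow> real"
  assumes "\<And>k. V k \<ge> 0" and "\<And>k. V (Suc k) \<le> q * V k" and "q \<ge> 0" and "q < 1"
  shows "V \<longlonglongrightarrow> 0"
proof (rule Lim_null_comparison)
  have "V k \<le> q ^ k * V 0" for k
  proof (induction k)
    case (Suc k)
    have "V (Suc k) \<le> q * V k" by (rule assms(2))
    also have "\<dots> \<le> q * (q ^ k * V 0)" using Suc assms(3) by (rule mult_left_mono)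
    finally show ?case by simp
  qed simp
  then show "\<forall>\<^sub>F k in sequentially. norm (V k) \<le> q ^ k * V 0"
    using assms(1) by simp
  show "(\<lambda>k. q ^ k * V 0) \<longlonglongrightarrow> 0"
    using assms(3,4) by (intro tendsto_mult_left_zero LIMSEQ_power_zero) simp
qed

lemma mat2_comparison_tendsto_zero:
  fixes e1 e2 :: "nat \<Rightarrow> real"
  assumes nonneg: "\<And>k. e1 k \<ge> 0" "\<And>k. e2 k \<ge> 0"
    and step1: "\<And>k. e1 (Suc k) \<le> a * e1 k + b * e2 k"
    and step2: "\<And>k. e2 (Suc k) \<le> c * e1 k + d * e2 k"
    and coeffs: "a \<ge> 0" "b \<ge> 0" "c \<ge> 0" "d \<ge> 0"
    and spectral: "spectral_radius (mat2 a b c d) < 1"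
  shows "e1 \<longlonglongrightarrow> 0" and "e2 \<longlonglongrightarrow> 0"
proof -
  obtain t where t: "t > 0" "a + t * c < 1" "b + t * d < t"
    using mat2_contracting_weight[OF coeffs(2,3) spectral_radius_mat2_less_1D(2,3)[OF coeffs(2,3) spectral]]
    by blast
  define q where "q = max (a + t * c) ((b + t * d) / t)"
  define V where "V k = e1 k + t * e2 k" for k
  have V_nonneg: "V k \<ge> 0" for k
    unfolding V_def using nonneg t by simp
  have "V (Suc k) \<le> q * V k" for k
  proof -
    have "V (Suc k) \<le> (a * e1 k + b * e2 k) + t * (c * e1 k + d * e2 k)"
      unfolding V_def by (intro add_mono step1 mult_left_mono step2) (use t(1) in simp)
    also have "\<dots> = (a + t * c) * e1 k + ((b + t * d) / t) * (t * e2 k)"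
      using t(1) by (simp add: field_simps)
    also have "\<dots> \<le> q * e1 k + q * (t * e2 k)"
      unfolding q_def using nonneg t(1) by (intro add_mono mult_right_mono) auto
    finally show ?thesis unfolding V_def by (simp add: algebra_simps)
  qed
  moreover have "q \<ge> 0"
    unfolding q_def using t(1) coeffs by (simp add: le_max_iff_disj)
  moreover have "q < 1"
    unfolding q_def using t by (simp add: divide_less_eq_1_pos)
  ultimately have V: "V \<longlonglongrightarrow> 0"
    using V_nonneg by (intro geometric_decay_tendsto_zero)
  show "e1 \<longlonglongrightarrow> 0"
    by (rule Lim_null_comparison[OF _ V]) (use nonneg t(1) in \<open>simp add: V_def\<close>)
  show "e2 \<longlonglongrightarrow> 0"
    by (rule Lim_null_comparison[OF _ tendsto_divide_zero[OF V, of t]])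
       (use nonneg t(1) in \<open>simp add: V_def field_simps\<close>)
qed

section \<open>The estimation error\<close>

locale lstm_observer =
  fixes Wf Wi Wc Wo :: "real^'u^'x"
    and Uf Ui Uc Uo :: "real^'x^'x"
    and bf bi bc bo :: "real^'x"
    and C :: "real^'x^'y" and b_y :: "real^'y"
    and Lf Li Lo :: "real^'y^'x"
    and umax :: real
    and u :: "nat \<Rightarrow> real^'u"
    and x \<xi> xh \<xi>h :: "nat \<Rightarrow> real^'x"
  assumes input: "\<And>k i. \<bar>u k $ i\<bar> \<le> umax"
    and plant_x: "\<And>k. x (Suc k) =
         vmap sigmoid (Wf *v u k + Uf *v \<xi> k + bf) \<circ>\<^sub>h x k
       + vmap sigmoid (Wi *v u k + Ui *v \<xi> k + bi) \<circ>\<^sub>h vmap tanh (Wc *v u k + Uc *v \<xi> k + bc)"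
    and plant_xi: "\<And>k. \<xi> (Suc k) =
         vmap sigmoid (Wo *v u k + Uo *v \<xi> k + bo) \<circ>\<^sub>h vmap tanh (x (Suc k))"
    and obs_x: "\<And>k. xh (Suc k) =
         vmap sigmoid (Wf *v u k + Uf *v \<xi>h k + bf
                       + Lf *v ((C *v \<xi> k + b_y) - (C *v \<xi>h k + b_y))) \<circ>\<^sub>h xh k
       + vmap sigmoid (Wi *v u k + Ui *v \<xi>h k + bi
                       + Li *v ((C *v \<xi> k + b_y) - (C *v \<xi>h k + b_y)))
           \<circ>\<^sub>h vmap tanh (Wc *v u k + Uc *v \<xi>h k + bc)"
    and obs_xi: "\<And>k. \<xi>h (Suc k) =
         vmap sigmoid (Wo *v u k + Uo *v \<xi>h k + bo
                       + Lo *v ((C *v \<xi> k + b_y) - (C *v \<xi>h k + b_y))) \<circ>\<^sub>h vmap tanh (xh (Suc k))"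
    and init_xi: "\<And>j. \<bar>\<xi> 0 $ j\<bar> < 1"
    and init_xih: "\<And>j. \<bar>\<xi>h 0 $ j\<bar> < 1"
    and init_x: "\<And>j. \<bar>x 0 $ j\<bar> \<le>
         sig_bar Wi Ui bi umax * tanh_bar Wc Uc bc umax / (1 - sig_bar Wf Uf bf umax)"
begin

abbreviation plant_arg :: "real^'u^'x \<Rightarrow> real^'x^'x \<Rightarrow> real^'x \<Rightarrow> nat \<Rightarrow> real^'x" where
  "plant_arg W U b k \<equiv> W *v u k + U *v \<xi> k + b"

abbreviation obs_arg ::
    "real^'u^'x \<Rightarrow> real^'x^'x \<Rightarrow> real^'x \<Rightarrow> real^'y^'x \<Rightarrow> nat \<Rightarrow> real^'x" where
  "obs_arg W U b L k \<equiv> W *v u k + U *v \<xi>h k + b + L *v ((C *v \<xi> k + b_y) - (C *v \<xi>h k + b_y))"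

abbreviation cell_bound :: real where
  "cell_bound \<equiv> sig_bar Wi Ui bi umax * tanh_bar Wc Uc bc umax / (1 - sig_bar Wf Uf bf umax)"

abbreviation obs_alpha :: real where
  "obs_alpha \<equiv> 1/4 * opnorm2 (Uf - Lf ** C) * cell_bound + sig_bar Wi Ui bi umax * opnorm2 Uc
     + 1/4 * opnorm2 (Ui - Li ** C) * tanh_bar Wc Uc bc umax"

abbreviation obs_output_gain :: real where
  "obs_output_gain \<equiv> 1/4 * tanh cell_bound * opnorm2 (Uo - Lo ** C)"

lemma cell_bound_nonneg: "cell_bound \<ge> 0"
  using sig_bar_less_1[of Wf Uf bf umax]
  by (intro divide_nonneg_pos mult_nonneg_nonneg sig_bar_nonneg tanh_bar_nonneg) simp

lemma cell_bound_fixpoint: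
  "sig_bar Wf Uf bf umax * cell_bound + sig_bar Wi Ui bi umax * tanh_bar Wc Uc bc umax = cell_bound"
  using sig_bar_less_1[of Wf Uf bf umax] by (simp add: field_simps)

lemma hidden_bounded: "\<bar>\<xi> k $ j\<bar> \<le> 1"
  using init_xi less_imp_le[OF abs_sigmoid_hadamard_tanh_less_1]
  by (cases k) (auto simp: plant_xi less_imp_le)

lemma obs_hidden_bounded: "\<bar>\<xi>h k $ j\<bar> \<le> 1"
  using init_xih less_imp_le[OF abs_sigmoid_hadamard_tanh_less_1]
  by (cases k) (auto simp: obs_xi less_imp_le)

lemma cell_bounded: "\<bar>x k $ j\<bar> \<le> cell_bound"
proof (induction k arbitrary: j)
  case 0
  show ?case by (rule init_x)
next
  case (Suc k)
  have "\<bar>x (Suc k) $ j\<bar>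
      \<le> sig_bar Wf Uf bf umax * cell_bound + sig_bar Wi Ui bi umax * tanh_bar Wc Uc bc umax"
    unfolding plant_x
    by (intro abs_cell_update_le abs_sigmoid_gate_le_sig_bar abs_tanh_gate_le_tanh_bar
        input hidden_bounded Suc)
  then show ?case unfolding cell_bound_fixpoint .
qed

lemma cell_error_step:
  "norm (xh (Suc k) - x (Suc k))
     \<le> sig_hat Wf Uf bf Lf C umax * norm (xh k - x k) + obs_alpha * norm (\<xi>h k - \<xi> k)"
proof -
  have "norm (xh (Suc k) - x (Suc k))
      \<le> sig_hat Wf Uf bf Lf C umax * norm (xh k - x k)
        + cell_bound * norm (vmap sigmoid (obs_arg Wf Uf bf Lf k) - vmap sigmoid (plant_arg Wf Uf bf k))
        + sig_bar Wi Ui bi umax * norm (vmap tanh (Wc *v u k + Uc *v \<xi>h k + bc) - vmap tanh (plant_arg Wc Uc bc k))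
        + tanh_bar Wc Uc bc umax * norm (vmap sigmoid (obs_arg Wi Ui bi Li k) - vmap sigmoid (plant_arg Wi Ui bi k))"
    unfolding plant_x obs_x
    by (intro norm_cell_update_diff_le abs_obs_sigmoid_gate_le_sig_hat abs_sigmoid_gate_le_sig_bar
        abs_tanh_gate_le_tanh_bar cell_bounded input hidden_bounded obs_hidden_bounded)
  also have "\<dots> \<le> sig_hat Wf Uf bf Lf C umax * norm (xh k - x k)
        + cell_bound * (1/4 * opnorm2 (Uf - Lf ** C) * norm (\<xi>h k - \<xi> k))
        + sig_bar Wi Ui bi umax * (opnorm2 Uc * norm (\<xi>h k - \<xi> k))
        + tanh_bar Wc Uc bc umax * (1/4 * opnorm2 (Ui - Li ** C) * norm (\<xi>h k - \<xi> k))"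
    by (intro add_mono order_refl mult_left_mono norm_obs_sigmoid_gate_diff_le norm_tanh_gate_diff_le
        cell_bound_nonneg sig_bar_nonneg tanh_bar_nonneg)
  also have "\<dots> = sig_hat Wf Uf bf Lf C umax * norm (xh k - x k) + obs_alpha * norm (\<xi>h k - \<xi> k)"
    by (simp add: algebra_simps)
  finally show ?thesis .
qed

lemma hidden_error_step:
  "norm (\<xi>h (Suc k) - \<xi> (Suc k))
     \<le> sig_hat Wo Uo bo Lo C umax * norm (xh (Suc k) - x (Suc k))
       + obs_output_gain * norm (\<xi>h k - \<xi> k)"
proof -
  have "norm (\<xi>h (Suc k) - \<xi> (Suc k))
      \<le> sig_hat Wo Uo bo Lo C umax * norm (xh (Suc k) - x (Suc k))
        + tanh cell_bound * norm (vmap sigmoid (obs_arg Wo Uo bo Lo k) - vmap sigmoid (plant_arg Wo Uo bo k))"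
    unfolding plant_xi obs_xi
    by (intro norm_hidden_update_diff_le abs_obs_sigmoid_gate_le_sig_hat cell_bounded input
        hidden_bounded obs_hidden_bounded)
  also have "\<dots> \<le> sig_hat Wo Uo bo Lo C umax * norm (xh (Suc k) - x (Suc k))
        + tanh cell_bound * (1/4 * opnorm2 (Uo - Lo ** C) * norm (\<xi>h k - \<xi> k))"
    using cell_bound_nonneg
    by (intro add_mono order_refl mult_left_mono norm_obs_sigmoid_gate_diff_le) simp
  finally show ?thesis by (simp add: algebra_simps)
qed

lemma estimation_error_tendsto_zero:
  assumes "spectral_radius (mat2 (sig_hat Wf Uf bf Lf C umax) obs_alpha
             (sig_hat Wf Uf bf Lf C umax * sig_hat Wo Uo bo Lo C umax)
             (obs_output_gain + sig_hat Wo Uo bo Lo C umax * obs_alpha)) < 1"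
  shows "(\<lambda>k. xh k - x k) \<longlonglongrightarrow> 0" and "(\<lambda>k. \<xi>h k - \<xi> k) \<longlonglongrightarrow> 0"
proof -
  let ?hf = "sig_hat Wf Uf bf Lf C umax" and ?ho = "sig_hat Wo Uo bo Lo C umax"
  have obs_alpha_nonneg: "obs_alpha \<ge> 0"
    by (intro add_nonneg_nonneg mult_nonneg_nonneg cell_bound_nonneg sig_bar_nonneg tanh_bar_nonneg
        opnorm2_nonneg) simp_all
  have hidden_step: "norm (\<xi>h (Suc k) - \<xi> (Suc k))
      \<le> ?hf * ?ho * norm (xh k - x k) + (obs_output_gain + ?ho * obs_alpha) * norm (\<xi>h k - \<xi> k)"
    for k
  proof -
    have "norm (\<xi>h (Suc k) - \<xi> (Suc k))
        \<le> ?ho * norm (xh (Suc k) - x (Suc k)) + obs_output_gain * norm (\<xi>h k - \<xi> k)"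
      by (rule hidden_error_step)
    also have "\<dots> \<le> ?ho * (?hf * norm (xh k - x k) + obs_alpha * norm (\<xi>h k - \<xi> k))
        + obs_output_gain * norm (\<xi>h k - \<xi> k)"
      by (intro add_mono mult_left_mono cell_error_step sig_hat_nonneg order_refl)
    finally show ?thesis by (simp add: algebra_simps)
  qed
  have "obs_output_gain \<ge> 0"
    using cell_bound_nonneg by (simp add: opnorm2_nonneg)
  then have "?hf * ?ho \<ge> 0" and "obs_output_gain + ?ho * obs_alpha \<ge> 0"
    using sig_hat_nonneg[of Wf Uf bf Lf C umax] sig_hat_nonneg[of Wo Uo bo Lo C umax] obs_alpha_nonneg
    by simp_all
  note comparison = mat2_comparison_tendsto_zero[of "\<lambda>k. norm (xh k - x k)" "\<lambda>k. norm (\<xi>h k - \<xi> k)"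
      ?hf obs_alpha "?hf * ?ho" "obs_output_gain + ?ho * obs_alpha",
      OF norm_ge_zero norm_ge_zero cell_error_step hidden_step sig_hat_nonneg obs_alpha_nonneg this assms]
  then show "(\<lambda>k. xh k - x k) \<longlonglongrightarrow> 0" and "(\<lambda>k. \<xi>h k - \<xi> k) \<longlonglongrightarrow> 0"
    by (simp_all add: tendsto_norm_zero_iff)
qed

end

theorem theorem3:
  fixes Wf Wi Wc Wo :: "real^'u^'x"
    and Uf Ui Uc Uo :: "real^'x^'x"
    and bf bi bc bo :: "real^'x"
    and C :: "real^'x^'y" and b_y :: "real^'y"
    and Lf Li Lo :: "real^'y^'x"
    and umax :: real
    and u :: "nat \<Rightarrow> real^'u"
    and x \<xi> xh \<xi>h :: "nat \<Rightarrow> real^'x"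
  assumes umax: "umax \<ge> 0"
    and input: "\<forall>k i. \<bar>u k $ i\<bar> \<le> umax"
    and plant_x: "\<forall>k. x (Suc k) =
         vmap sigmoid (Wf *v u k + Uf *v \<xi> k + bf) \<circ>\<^sub>h x k
       + vmap sigmoid (Wi *v u k + Ui *v \<xi> k + bi) \<circ>\<^sub>h vmap tanh (Wc *v u k + Uc *v \<xi> k + bc)"
    and plant_xi: "\<forall>k. \<xi> (Suc k) =
         vmap sigmoid (Wo *v u k + Uo *v \<xi> k + bo) \<circ>\<^sub>h vmap tanh (x (Suc k))"
    and obs_x: "\<forall>k. xh (Suc k) =
         vmap sigmoid (Wf *v u k + Uf *v \<xi>h k + bf
                       + Lf *v ((C *v \<xi> k + b_y) - (C *v \<xi>h k + b_y))) \<circ>\<^sub>h xh k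
       + vmap sigmoid (Wi *v u k + Ui *v \<xi>h k + bi
                       + Li *v ((C *v \<xi> k + b_y) - (C *v \<xi>h k + b_y)))
           \<circ>\<^sub>h vmap tanh (Wc *v u k + Uc *v \<xi>h k + bc)"
    and obs_xi: "\<forall>k. \<xi>h (Suc k) =
         vmap sigmoid (Wo *v u k + Uo *v \<xi>h k + bo
                       + Lo *v ((C *v \<xi> k + b_y) - (C *v \<xi>h k + b_y))) \<circ>\<^sub>h vmap tanh (xh (Suc k))"
    and init_xi: "\<forall>j. \<bar>\<xi> 0 $ j\<bar> < 1"
    and init_xih: "\<forall>j. \<bar>\<xi>h 0 $ j\<bar> < 1"
    and init_x: "\<forall>j. \<bar>x 0 $ j\<bar> \<le>
         sig_bar Wi Ui bi umax * tanh_bar Wc Uc bc umax / (1 - sig_bar Wf Uf bf umax)"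
    and init_xh: "\<forall>j. \<bar>xh 0 $ j\<bar> \<le>
         sig_hat Wi Ui bi Li C umax * tanh_bar Wc Uc bc umax / (1 - sig_hat Wf Uf bf Lf C umax)"
    and rho_delta: "let sf = sig_bar Wf Uf bf umax; si = sig_bar Wi Ui bi umax;
                        so = sig_bar Wo Uo bo umax; sc = tanh_bar Wc Uc bc umax;
                        sx = tanh (si * sc / (1 - sf));
                        \<alpha> = 1/4 * opnorm2 Uf * (si * sc / (1 - sf)) + si * opnorm2 Uc
                            + 1/4 * opnorm2 Ui * sc
                    in spectral_radius (mat2 sf \<alpha> (so * sf) (\<alpha> * so + 1/4 * sx * opnorm2 Uo)) < 1"
    and rho_hat: "let sf = sig_bar Wf Uf bf umax; si = sig_bar Wi Ui bi umax;
                      sc = tanh_bar Wc Uc bc umax;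
                      sx = tanh (si * sc / (1 - sf));
                      hf = sig_hat Wf Uf bf Lf C umax; ho = sig_hat Wo Uo bo Lo C umax;
                      h\<alpha> = 1/4 * opnorm2 (Uf - Lf ** C) * (si * sc / (1 - sf)) + si * opnorm2 Uc
                            + 1/4 * opnorm2 (Ui - Li ** C) * sc
                  in spectral_radius (mat2 hf h\<alpha> (hf * ho) (1/4 * sx * opnorm2 (Uo - Lo ** C) + ho * h\<alpha>)) < 1"
  shows "(\<lambda>k. xh k - x k) \<longlonglongrightarrow> 0 \<and> (\<lambda>k. \<xi>h k - \<xi> k) \<longlonglongrightarrow> 0"
proof -
  have "lstm_observer Wf Wi Wc Wo Uf Ui Uc Uo bf bi bc bo C b_y Lf Li Lo umax u x \<xi> xh \<xi>h"
    using input plant_x plant_xi obs_x obs_xi init_xi init_xih init_x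
    unfolding lstm_observer_def by blast
  from lstm_observer.estimation_error_tendsto_zero[OF this rho_hat[unfolded Let_def]]
  show ?thesis ..
qed

end
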